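(* Let $\Gamma=(V,E)$ be a metric graph with $V=\{v_1,\dots,v_n\}$ and $E=\{e_1,\dots,e_m\}$, where $e_j$ has endpoints $v_{j(1)},v_{j(2)}$ ($1\le j(1),j(2)\le n$) and length $M_j>0$. Let $D$ be a vertex-supported divisor on $\Gamma$ with $d_i=D(v_i)$. Let $f$ be a rational function on $\Gamma$ with at most two linear pieces on each edge of $\Gamma$; write $a_i=f(v_i)$, and let $s_{j,1},s_{j,2}$ be the outgoing slopes of $f$ along $e_j$ at $v_{j(1)}$ and at $v_{j(2)}$ respectively. Then $f\in R(D)$ if and only if (a) for each $1\le i\le n$: $d_i+\sum_{j:\,j(1)=i}s_{j,1}+\sum_{j:\,j(2)=i}s_{j,2}\ge 0$; and (b) for each $1\le j\le m$, either $s_{j,1}+s_{j,2}=0$ and $a_{j(1)}-a_{j(2)}+s_{j,1}M_j=0$, or $s_{j,1}+s_{j,2}<0$ and $s_{j,2}M_j<a_{j(1)}-a_{j(2)}<-s_{j,1}M_j$.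
   Context: A metric graph is a connected undirected graph (loops and parallel edges allowed) whose edges have positive real lengths, each edge viewed as a real segment. A divisor is a finite formal $\mathbb{Z}$-combination of points of $\Gamma$; it is vertex-supported if its support is contained in $V$. A rational function is a continuous $f:\Gamma\to\mathbb{R}$, piecewise linear on each edge with finitely many pieces and integer slopes; $\mathrm{ord}_x(f)$ is the sum of the outgoing slopes of $f$ at $x$ over all directions, and $(f)=\sum_x\mathrm{ord}_x(f)x$. $R(D)$ is the set of rational functions $f$ such that $D+(f)$ is effective (all coefficients $\ge 0$). *)

theory Defs
  imports Complex_Main
begin

text \<open>Combinatorial data of a metric graph: vertices are 0..n-1, edges are 0..m-1;
 edge j has endpoints src j (= j(1)) and tgt j (= j(2)) and length M j > 0.
 Edge j is identified with the segment [0, M j], with 0 at src j and M j at tgt j.\<close>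

definition metric_graph ::
  "nat \<Rightarrow> nat \<Rightarrow> (nat \<Rightarrow> nat) \<Rightarrow> (nat \<Rightarrow> nat) \<Rightarrow> (nat \<Rightarrow> real) \<Rightarrow> bool" where
  "metric_graph n m src tgt M \<longleftrightarrow>
     n \<ge> 1 \<and> (\<forall>j<m. src j < n \<and> tgt j < n \<and> M j > 0) \<and>
     (\<forall>i<n. \<forall>k<n. (i, k) \<in> ({(src j, tgt j) | j. j < m} \<union> {(tgt j, src j) | j. j < m})\<^sup>*)"

definition pl_pieces :: "real \<Rightarrow> (real \<Rightarrow> real) \<Rightarrow> nat \<Rightarrow> bool" where
  "pl_pieces L g k \<longleftrightarrow> k \<ge> 1 \<and> (\<exists>(x :: nat \<Rightarrow> real) (c :: nat \<Rightarrow> int).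
     x 0 = 0 \<and> x k = L \<and> (\<forall>i<k. x i < x (Suc i)) \<and>
     (\<forall>i<k. \<forall>t\<in>{x i .. x (Suc i)}. g t = g (x i) + of_int (c i) * (t - x i)))"

definition rational_fn ::
  "nat \<Rightarrow> (nat \<Rightarrow> nat) \<Rightarrow> (nat \<Rightarrow> nat) \<Rightarrow> (nat \<Rightarrow> real)
   \<Rightarrow> (nat \<Rightarrow> real) \<Rightarrow> (nat \<Rightarrow> real \<Rightarrow> real) \<Rightarrow> bool" where
  "rational_fn m src tgt M a g \<longleftrightarrow>
     (\<forall>j<m. g j 0 = a (src j) \<and> g j (M j) = a (tgt j) \<and> (\<exists>k. pl_pieces (M j) (g j) k))"

definition slope_up :: "(real \<Rightarrow> real) \<Rightarrow> real \<Rightarrow> real" where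
  "slope_up h t = Lim (at_right 0) (\<lambda>s. (h (t + s) - h t) / s)"

definition slope_down :: "(real \<Rightarrow> real) \<Rightarrow> real \<Rightarrow> real" where
  "slope_down h t = Lim (at_right 0) (\<lambda>s. (h (t - s) - h t) / s)"

text \<open>ord at vertex i: sum of outgoing slopes over all directions (a loop contributes twice).\<close>
definition ord_vertex ::
  "nat \<Rightarrow> (nat \<Rightarrow> nat) \<Rightarrow> (nat \<Rightarrow> nat) \<Rightarrow> (nat \<Rightarrow> real) \<Rightarrow> (nat \<Rightarrow> real \<Rightarrow> real) \<Rightarrow> nat \<Rightarrow> real" where
  "ord_vertex m src tgt M g i =
     (\<Sum>j\<in>{j. j < m \<and> src j = i}. slope_up (g j) 0) +
     (\<Sum>j\<in>{j. j < m \<and> tgt j = i}. slope_down (g j) (M j))"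

definition ord_interior :: "(nat \<Rightarrow> real \<Rightarrow> real) \<Rightarrow> nat \<Rightarrow> real \<Rightarrow> real" where
  "ord_interior g j t = slope_up (g j) t + slope_down (g j) t"

definition in_R ::
  "nat \<Rightarrow> nat \<Rightarrow> (nat \<Rightarrow> nat) \<Rightarrow> (nat \<Rightarrow> nat) \<Rightarrow> (nat \<Rightarrow> real) \<Rightarrow> (nat \<Rightarrow> int)
   \<Rightarrow> (nat \<Rightarrow> real) \<Rightarrow> (nat \<Rightarrow> real \<Rightarrow> real) \<Rightarrow> bool" where
  "in_R n m src tgt M d a g \<longleftrightarrow>
     rational_fn m src tgt M a g \<and>
     (\<forall>i<n. of_int (d i) + ord_vertex m src tgt M g i \<ge> 0) \<and>
     (\<forall>j<m. \<forall>t\<in>{0<..<M j}. ord_interior g j t \<ge> 0)"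

end

theory Submission imports Defs begin

text \<open>With at most two pieces, f is affine with slope c0 on [0, p] and with slope c1 on
  [p, L] for some 0 < p < L (p arbitrary if there is only one piece). Its order vanishes at
  interior points other than p and equals c1 - c0 at p, so the interior of the edge is
  effective iff c0 \<le> c1. The endpoint slopes are s1 = c0 and s2 = -c1, and
  f(L) - f(0) = c0 p + c1 (L - p) lies strictly between c0 L and c1 L when c0 < c1; this turns
  c0 \<le> c1 into the dichotomy (b).\<close>

lemma slope_up_affine:
  assumes "x \<le> t" "t < y" "\<forall>u\<in>{x..y}. h u = h x + c * (u - x)"
  shows "slope_up h t = c"
proof -
  have "eventually (\<lambda>s. (h (t + s) - h t) / s = c) (at_right 0)"
    unfolding eventually_at_right_field
  proof (intro exI[of _ "y - t"] conjI allI impI)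
    fix s :: real assume "0 < s" "s < y - t"
    then have "t + s \<in> {x..y}" "t \<in> {x..y}" using assms(1,2) by auto
    then have "h (t + s) = h x + c * (t + s - x)" "h t = h x + c * (t - x)"
      using assms(3) by blast+
    then show "(h (t + s) - h t) / s = c" using \<open>0 < s\<close> by (simp add: field_simps)
  qed (use assms(1,2) in simp)
  then have "((\<lambda>s. (h (t + s) - h t) / s) \<longlongrightarrow> c) (at_right 0)"
    by (rule tendsto_eventually)
  then show ?thesis
    unfolding slope_up_def by (rule tendsto_Lim[OF trivial_limit_at_right_real])
qed

lemma slope_down_affine:
  assumes "x < t" "t \<le> y" "\<forall>u\<in>{x..y}. h u = h x + c * (u - x)"
  shows "slope_down h t = - c"
proof -
  have "eventually (\<lambda>s. (h (t - s) - h t) / s = - c) (at_right 0)"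
    unfolding eventually_at_right_field
  proof (intro exI[of _ "t - x"] conjI allI impI)
    fix s :: real assume "0 < s" "s < t - x"
    then have "t - s \<in> {x..y}" "t \<in> {x..y}" using assms(1,2) by auto
    then have "h (t - s) = h x + c * (t - s - x)" "h t = h x + c * (t - x)"
      using assms(3) by blast+
    then show "(h (t - s) - h t) / s = - c" using \<open>0 < s\<close> by (simp add: field_simps)
  qed (use assms(1,2) in simp)
  then have "((\<lambda>s. (h (t - s) - h t) / s) \<longlongrightarrow> - c) (at_right 0)"
    by (rule tendsto_eventually)
  then show ?thesis
    unfolding slope_down_def by (rule tendsto_Lim[OF trivial_limit_at_right_real])
qed

lemma pl_pieces_le_2_obtain_breakpoint:
  assumes "pl_pieces L h k" "k \<le> 2"
  obtains p c0 c1 :: real where "0 < p" "p < L"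
    "\<forall>u\<in>{0..p}. h u = h 0 + c0 * (u - 0)"
    "\<forall>u\<in>{p..L}. h u = h p + c1 * (u - p)"
proof -
  obtain x :: "nat \<Rightarrow> real" and c :: "nat \<Rightarrow> int"
    where "k \<ge> 1" and x0: "x 0 = 0" and xk: "x k = L" and inc: "\<forall>i<k. x i < x (Suc i)"
      and lin: "\<forall>i<k. \<forall>t\<in>{x i .. x (Suc i)}. h t = h (x i) + of_int (c i) * (t - x i)"
    using assms(1) unfolding pl_pieces_def by blast
  with assms(2) consider "k = 1" | "k = 2" by linarith
  then show ?thesis
  proof cases
    case 1
    then have "0 < L" using inc x0 xk by auto
    have affine: "h u = h 0 + of_int (c 0) * u" if "u \<in> {0..L}" for u
      using lin[rule_format, of 0 u] that x0 xk 1 by simp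
    show ?thesis
    proof (rule that[of "L/2" "of_int (c 0)" "of_int (c 0)"])
      show "\<forall>u\<in>{0..L/2}. h u = h 0 + of_int (c 0) * (u - 0)"
      proof
        fix u assume "u \<in> {0..L/2}"
        then show "h u = h 0 + of_int (c 0) * (u - 0)" using affine[of u] \<open>0 < L\<close> by simp
      qed
      show "\<forall>u\<in>{L/2..L}. h u = h (L/2) + of_int (c 0) * (u - L/2)"
      proof
        fix u assume "u \<in> {L/2..L}"
        then show "h u = h (L/2) + of_int (c 0) * (u - L/2)"
          using affine[of u] affine[of "L/2"] \<open>0 < L\<close> by (simp add: algebra_simps)
      qed
    qed (use \<open>0 < L\<close> in auto)
  next
    case 2
    then have "0 < k" "1 < k" "Suc 1 = k" by auto
    have "x 0 < x (Suc 0)" "x 1 < x (Suc 1)"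
      using inc \<open>0 < k\<close> \<open>1 < k\<close> by blast+
    moreover have "\<forall>u\<in>{x 0..x (Suc 0)}. h u = h (x 0) + of_int (c 0) * (u - x 0)"
      and "\<forall>u\<in>{x 1..x (Suc 1)}. h u = h (x 1) + of_int (c 1) * (u - x 1)"
      using lin \<open>0 < k\<close> \<open>1 < k\<close> by blast+
    ultimately show ?thesis
      unfolding x0 One_nat_def[symmetric] \<open>Suc 1 = k\<close> xk by (rule that)
  qed
qed

context
  fixes L p c0 c1 :: real and h :: "real \<Rightarrow> real"
  assumes breakpoint: "0 < p" "p < L"
    and left_piece: "\<forall>u\<in>{0..p}. h u = h 0 + c0 * (u - 0)"
    and right_piece: "\<forall>u\<in>{p..L}. h u = h p + c1 * (u - p)"
begin

lemma two_piece_endpoint_slopes: "slope_up h 0 = c0" "slope_down h L = - c1"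
  using slope_up_affine[OF _ _ left_piece] slope_down_affine[OF _ _ right_piece] breakpoint
  by auto

lemma two_piece_endpoint_values: "h L = h 0 + c0 * p + c1 * (L - p)"
proof -
  have "h p = h 0 + c0 * p" using bspec[OF left_piece, of p] breakpoint by simp
  moreover have "h L = h p + c1 * (L - p)" using bspec[OF right_piece, of L] breakpoint by simp
  ultimately show ?thesis by simp
qed

lemma two_piece_interior_ord_nonneg_iff:
  "(\<forall>t\<in>{0<..<L}. slope_up h t + slope_down h t \<ge> 0) \<longleftrightarrow> c0 \<le> c1"
proof
  assume "\<forall>t\<in>{0<..<L}. slope_up h t + slope_down h t \<ge> 0"
  then have "slope_up h p + slope_down h p \<ge> 0" using breakpoint by auto
  moreover have "slope_up h p = c1" "slope_down h p = - c0"
    using slope_up_affine[OF _ _ right_piece] slope_down_affine[OF _ _ left_piece] breakpoint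
    by auto
  ultimately show "c0 \<le> c1" by simp
next
  assume "c0 \<le> c1"
  show "\<forall>t\<in>{0<..<L}. slope_up h t + slope_down h t \<ge> 0"
  proof
    fix t assume t: "t \<in> {0<..<L}"
    have "slope_up h t = (if t < p then c0 else c1)"
      using slope_up_affine[OF _ _ left_piece] slope_up_affine[OF _ _ right_piece] t by auto
    moreover have "slope_down h t = - (if t \<le> p then c0 else c1)"
      using slope_down_affine[OF _ _ left_piece] slope_down_affine[OF _ _ right_piece] t by auto
    ultimately show "slope_up h t + slope_down h t \<ge> 0" using \<open>c0 \<le> c1\<close> by auto
  qed
qed

end

lemma two_slopes_le_iff_endpoint_condition:
  fixes L p c0 c1 A B :: real
  assumes "0 < p" "p < L" and "B = A + c0 * p + c1 * (L - p)"
  shows "c0 \<le> c1 \<longleftrightarrow>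
    (c0 + - c1 = 0 \<and> A - B + c0 * L = 0) \<or>
    (c0 + - c1 < 0 \<and> - c1 * L < A - B \<and> A - B < - c0 * L)"
proof -
  have gap0: "A - B + c0 * L = (c0 - c1) * (L - p)"
    using assms(3) by (simp add: algebra_simps)
  have gap1: "A - B + c1 * L = (c1 - c0) * p"
    using assms(3) by (simp add: algebra_simps)
  show ?thesis
  proof (cases c0 c1 rule: linorder_cases)
    case less
    then have "(c0 - c1) * (L - p) < 0" "(c1 - c0) * p > 0"
      using assms(1,2) by (simp_all add: mult_neg_pos)
    then have "A - B + c0 * L < 0" "A - B + c1 * L > 0"
      unfolding gap0 gap1 .
    with less show ?thesis by auto
  next
    case equal
    with gap0 show ?thesis by simp
  next
    case greater
    then show ?thesis by simp
  qed
qed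

lemma edge_interior_effective_iff:
  assumes "pl_pieces L h k" "k \<le> 2"
  shows "(\<forall>t\<in>{0<..<L}. slope_up h t + slope_down h t \<ge> 0) \<longleftrightarrow>
    (let s1 = slope_up h 0; s2 = slope_down h L in
        (s1 + s2 = 0 \<and> h 0 - h L + s1 * L = 0) \<or>
        (s1 + s2 < 0 \<and> s2 * L < h 0 - h L \<and> h 0 - h L < - s1 * L))"
proof -
  obtain p c0 c1 where two_pieces: "0 < p" "p < L"
    "\<forall>u\<in>{0..p}. h u = h 0 + c0 * (u - 0)" "\<forall>u\<in>{p..L}. h u = h p + c1 * (u - p)"
    using pl_pieces_le_2_obtain_breakpoint[OF assms] .
  show ?thesis
    unfolding two_piece_interior_ord_nonneg_iff[OF two_pieces]
      two_piece_endpoint_slopes[OF two_pieces] Let_def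
    using two_slopes_le_iff_endpoint_condition[OF two_pieces(1,2)
        two_piece_endpoint_values[OF two_pieces]]
    by simp
qed

theorem lemma2p18:
  fixes n m :: nat and src tgt :: "nat \<Rightarrow> nat" and M :: "nat \<Rightarrow> real"
    and d :: "nat \<Rightarrow> int" and a :: "nat \<Rightarrow> real" and g :: "nat \<Rightarrow> real \<Rightarrow> real"
  assumes "metric_graph n m src tgt M"
    and "rational_fn m src tgt M a g"
    and "\<forall>j<m. \<exists>k\<le>2. pl_pieces (M j) (g j) k"
  shows "in_R n m src tgt M d a g \<longleftrightarrow>
    ((\<forall>i<n. of_int (d i) + (\<Sum>j\<in>{j. j < m \<and> src j = i}. slope_up (g j) 0)
                         + (\<Sum>j\<in>{j. j < m \<and> tgt j = i}. slope_down (g j) (M j)) \<ge> 0) \<and>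
     (\<forall>j<m. let s1 = slope_up (g j) 0; s2 = slope_down (g j) (M j) in
        (s1 + s2 = 0 \<and> a (src j) - a (tgt j) + s1 * M j = 0) \<or>
        (s1 + s2 < 0 \<and> s2 * M j < a (src j) - a (tgt j) \<and> a (src j) - a (tgt j) < - s1 * M j)))"
proof -
  have edges: "(\<forall>t\<in>{0<..<M j}. ord_interior g j t \<ge> 0) \<longleftrightarrow>
     (let s1 = slope_up (g j) 0; s2 = slope_down (g j) (M j) in
        (s1 + s2 = 0 \<and> a (src j) - a (tgt j) + s1 * M j = 0) \<or>
        (s1 + s2 < 0 \<and> s2 * M j < a (src j) - a (tgt j) \<and> a (src j) - a (tgt j) < - s1 * M j))"
    if "j < m" for j
  proof -
    obtain k where "k \<le> 2" "pl_pieces (M j) (g j) k" using assms(3) \<open>j < m\<close> by blast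
    moreover have "g j 0 = a (src j)" "g j (M j) = a (tgt j)"
      using assms(2) \<open>j < m\<close> unfolding rational_fn_def by auto
    ultimately show ?thesis
      unfolding ord_interior_def using edge_interior_effective_iff[of "M j" "g j" k] by simp
  qed
  have vertices: "(\<forall>i<n. of_int (d i) + ord_vertex m src tgt M g i \<ge> 0) \<longleftrightarrow>
    (\<forall>i<n. of_int (d i) + (\<Sum>j\<in>{j. j < m \<and> src j = i}. slope_up (g j) 0)
                         + (\<Sum>j\<in>{j. j < m \<and> tgt j = i}. slope_down (g j) (M j)) \<ge> 0)"
    unfolding ord_vertex_def by (simp add: add.assoc)
  have interior: "(\<forall>j<m. \<forall>t\<in>{0<..<M j}. ord_interior g j t \<ge> 0) \<longleftrightarrow>
     (\<forall>j<m. let s1 = slope_up (g j) 0; s2 = slope_down (g j) (M j) in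
        (s1 + s2 = 0 \<and> a (src j) - a (tgt j) + s1 * M j = 0) \<or>
        (s1 + s2 < 0 \<and> s2 * M j < a (src j) - a (tgt j) \<and> a (src j) - a (tgt j) < - s1 * M j))"
    using edges by blast
  show ?thesis
    unfolding in_R_def vertices interior using assms(2) by blast
qed

end
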